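(* Let $\vec B=(b_0,\dots,b_{N-1})$ be a binary digit vector and let $\overleftarrow{B}$ be its reverse, $\overleftarrow{B}(n)=b_{N-1-n}$ for $n=0,\dots,N-1$. Then for all $x\in[0,1]$, $$F_{\overleftarrow{B}}(x)=1-F_{\vec B}(1-x).$$
   Context: A binary digit vector of length (scale factor) $N\ge3$ is $\vec B=(b_0,\dots,b_{N-1})\in\{0,1\}^N$ with $2\le\|\vec B\|:=\sum_i b_i\le N-1$; its digit set is $D=\{i:b_i=1\}$. With $\phi_d(x)=(x+d)/N$ for $d\in D$, let $\mu_{\vec B}$ be the unique Borel probability measure with $\mu_{\vec B}=\frac{1}{\|\vec B\|}\sum_{d\in D}\mu_{\vec B}\circ\phi_d^{-1}$, supported on the attractor $C_{\vec B}\subset[0,1]$. The CDF is $F_{\vec B}(x)=\mu_{\vec B}([0,x])$, $x\in[0,1]$. *)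

theory Defs
  imports "HOL-Probability.Probability"
begin

definition is_bdv :: "nat list \<Rightarrow> bool" where
  "is_bdv B \<longleftrightarrow> length B \<ge> 3 \<and> set B \<subseteq> {0, 1} \<and>
     2 \<le> sum_list B \<and> sum_list B \<le> length B - 1"

definition digit_set :: "nat list \<Rightarrow> nat set" where
  "digit_set B = {i. i < length B \<and> B ! i = 1}"

definition sim_map :: "nat \<Rightarrow> nat \<Rightarrow> real \<Rightarrow> real" where
  "sim_map N d x = (x + real d) / real N"

definition self_similar :: "nat list \<Rightarrow> real measure \<Rightarrow> bool" where
  "self_similar B \<mu> \<longleftrightarrow>
     (\<forall>A \<in> sets borel. measure \<mu> A =
        (1 / real (sum_list B)) * (\<Sum>d\<in>digit_set B. measure \<mu> (sim_map (length B) d -` A)))"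

definition bdv_measure :: "nat list \<Rightarrow> real measure" where
  "bdv_measure B = (THE \<mu>. prob_space \<mu> \<and> sets \<mu> = sets (borel :: real measure) \<and> self_similar B \<mu>)"

definition bdv_cdf :: "nat list \<Rightarrow> real \<Rightarrow> real" where
  "bdv_cdf B x = measure (bdv_measure B) {0..x}"

end

theory Submission
  imports Defs
begin

(* Reflection y \<mapsto> 1 - y conjugates \<phi>_d to \<phi>_(N-1-d), so it carries a self-similar probability
   measure for B to one for rev B; by uniqueness, \<mu>_(rev B) is the reflected image of \<mu>_B, and the
   identity follows because \<mu>_B has no atoms.
   Atoms: with k = ||B|| \<ge> 2, iterating self-similarity writes \<mu>{p} as k^-n times the mass of
   a finite set of points, so \<mu>{p} \<le> k^-n.
   Uniqueness: the CDF satisfies F x = (1/k) \<Sum>d\<in>D. F (N x - d); comparing F x with F (N x) and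
   F (N x - (N - 1)) shows F = 0 on (-\<infinity>, 0] and F = 1 on [1, \<infinity>), hence the equation determines
   F at every N-adic rational, and F is continuous.
   Existence: the law of \<Sum>i. d_i / N^(i+1) for i.i.d. digits d_i uniform on D. *)

lemma digit_set_finite [simp]: "finite (digit_set B)"
  by (simp add: digit_set_def)

lemma digit_set_less_length: "d \<in> digit_set B \<Longrightarrow> d < length B"
  by (simp add: digit_set_def)

lemma card_digit_set:
  assumes "set B \<subseteq> {0, 1}"
  shows "card (digit_set B) = sum_list B"
proof -
  have "sum_list B = (\<Sum>i<length B. B ! i)"
    by (simp add: sum_list_sum_nth atLeast0LessThan)
  also have "\<dots> = (\<Sum>i<length B. if B ! i = 1 then 1 else 0)"
  proof (rule sum.cong)
    fix i assume "i \<in> {..<length B}"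
    then have "B ! i \<in> {0, 1}" using assms nth_mem by fastforce
    then show "B ! i = (if B ! i = 1 then 1 else 0)" by auto
  qed simp
  also have "\<dots> = card {i \<in> {..<length B}. B ! i = 1}"
    by (simp add: sum.If_cases Collect_conj_eq lessThan_def)
  also have "{i \<in> {..<length B}. B ! i = 1} = digit_set B"
    by (auto simp: digit_set_def)
  finally show ?thesis by simp
qed

lemma digit_set_rev: "digit_set (rev B) = (\<lambda>d. length B - 1 - d) ` digit_set B"
proof (rule set_eqI)
  fix d
  show "d \<in> digit_set (rev B) \<longleftrightarrow> d \<in> (\<lambda>d. length B - 1 - d) ` digit_set B"
  proof
    assume "d \<in> digit_set (rev B)"
    then have "d < length B" and "B ! (length B - 1 - d) = 1"
      by (auto simp: digit_set_def rev_nth)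
    then show "d \<in> (\<lambda>d. length B - 1 - d) ` digit_set B"
      by (intro image_eqI[of _ _ "length B - 1 - d"]) (auto simp: digit_set_def)
  next
    assume "d \<in> (\<lambda>d. length B - 1 - d) ` digit_set B"
    then obtain e where "e < length B" "B ! e = 1" "d = length B - 1 - e"
      by (auto simp: digit_set_def)
    then show "d \<in> digit_set (rev B)"
      by (auto simp: digit_set_def rev_nth Suc_diff_Suc)
  qed
qed

lemma is_bdv_rev: "is_bdv B \<Longrightarrow> is_bdv (rev B)"
  by (simp add: is_bdv_def)

lemma inj_on_add_mult_lessThan: "inj_on (\<lambda>(e, d). d + n * e) (A \<times> {..<n})" for n :: nat
proof (rule inj_onI, clarify)
  fix e d e' d' assume "d < n" "d' < n" and eq: "d + n * e = d' + n * e'"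
  have "(d + n * e) div n = e" "(d + n * e) mod n = d"
    "(d' + n * e') div n = e'" "(d' + n * e') mod n = d'"
    using \<open>d < n\<close> \<open>d' < n\<close> by simp_all
  then show "e = e' \<and> d = d'"
    using eq by metis
qed

lemma filterlim_realpow_at_top:
  fixes c :: real
  assumes "1 < c"
  shows "filterlim (\<lambda>n. c ^ n) at_top sequentially"
proof -
  have "filterlim (\<lambda>n. norm (c ^ n)) at_top sequentially"
    using assms by (intro filterlim_at_infinity_imp_norm_at_top filterlim_realpow_sequentially_gt1) simp
  then show ?thesis
    using assms by simp
qed

lemma eq_if_eq_on_adic_rationals:
  fixes f g :: "real \<Rightarrow> real" and K :: real
  assumes "1 < K" and "\<And>x. isCont f x" and "\<And>x. isCont g x"
    and eq: "\<And>j n. f (of_int j / K ^ n) = g (of_int j / K ^ n)"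
  shows "f x = g x"
proof -
  define q where "q n = of_int \<lfloor>x * K ^ n\<rfloor> / K ^ n" for n
  have bounds: "x - (1 / K) ^ n \<le> q n \<and> q n \<le> x" for n
  proof
    have "0 < K ^ n"
      using \<open>1 < K\<close> by simp
    have "x - (1 / K) ^ n = (x * K ^ n - 1) / K ^ n"
      using \<open>1 < K\<close> \<open>0 < K ^ n\<close> by (simp add: power_one_over diff_divide_distrib)
    also have "\<dots> \<le> q n"
      unfolding q_def using \<open>0 < K ^ n\<close> by (intro divide_right_mono) linarith+
    finally show "x - (1 / K) ^ n \<le> q n" .
    have "q n \<le> x * K ^ n / K ^ n"
      unfolding q_def using \<open>0 < K ^ n\<close> by (intro divide_right_mono) linarith+
    then show "q n \<le> x"
      using \<open>1 < K\<close> by simp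
  qed
  have "(\<lambda>n. x - (1 / K) ^ n) \<longlonglongrightarrow> x - 0"
    using \<open>1 < K\<close> by (intro tendsto_diff tendsto_const LIMSEQ_power_zero) auto
  then have lim: "(\<lambda>n. x - (1 / K) ^ n) \<longlonglongrightarrow> x"
    by simp
  have lower: "eventually (\<lambda>n. x - (1 / K) ^ n \<le> q n) sequentially"
    and upper: "eventually (\<lambda>n. q n \<le> x) sequentially"
    using bounds by simp_all
  have "q \<longlonglongrightarrow> x"
    by (rule real_tendsto_sandwich[OF lower upper lim tendsto_const])
  have "(\<lambda>n. f (q n)) \<longlonglongrightarrow> f x"
    by (rule isCont_tendsto_compose[OF assms(2) \<open>q \<longlonglongrightarrow> x\<close>])
  moreover have "(\<lambda>n. g (q n)) \<longlonglongrightarrow> g x"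
    by (rule isCont_tendsto_compose[OF assms(3) \<open>q \<longlonglongrightarrow> x\<close>])
  moreover have "(\<lambda>n. f (q n)) = (\<lambda>n. g (q n))"
    by (simp add: q_def eq)
  ultimately show ?thesis
    using LIMSEQ_unique by simp
qed

lemma isCont_eq_if_eq_left:
  fixes f :: "real \<Rightarrow> real"
  assumes "isCont f a" and "\<And>x. x < a \<Longrightarrow> f x = c"
  shows "f a = c"
proof -
  have "(f \<longlongrightarrow> f a) (at_left a)"
    using assms(1) by (simp add: isCont_def filterlim_at_split)
  moreover have "eventually (\<lambda>x. x \<in> {a - 1<..<a}) (at_left a)"
    by (rule eventually_at_left_real) simp
  then have "eventually (\<lambda>x. f x = c) (at_left a)"
    by eventually_elim (simp add: assms(2))
  then have "(f \<longlongrightarrow> c) (at_left a)"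
    by (rule tendsto_eventually)
  ultimately show ?thesis
    using tendsto_unique[OF trivial_limit_at_left_real] by blast
qed

lemma isCont_eq_if_eq_right:
  fixes f :: "real \<Rightarrow> real"
  assumes "isCont f a" and "\<And>x. a < x \<Longrightarrow> f x = c"
  shows "f a = c"
proof -
  have "(f \<longlongrightarrow> f a) (at_right a)"
    using assms(1) by (simp add: isCont_def filterlim_at_split)
  moreover have "eventually (\<lambda>x. x \<in> {a<..<a + 1}) (at_right a)"
    by (rule eventually_at_right_real) simp
  then have "eventually (\<lambda>x. f x = c) (at_right a)"
    by eventually_elim (simp add: assms(2))
  then have "(f \<longlongrightarrow> c) (at_right a)"
    by (rule tendsto_eventually)
  ultimately show ?thesis
    using tendsto_unique[OF trivial_limit_at_right_real] by blast
qed

lemma cdf_distr_reflect: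
  assumes "real_distribution M" and "measure M {c - x} = 0"
  shows "cdf (distr M borel (\<lambda>y. c - y)) x = 1 - cdf M (c - x)"
proof -
  interpret real_distribution M by fact
  have "cdf (distr M borel (\<lambda>y. c - y)) x = measure M ((\<lambda>y. c - y) -` {..x})"
    unfolding cdf_def by (subst measure_distr) auto
  also have "(\<lambda>y. c - y) -` {..x} = UNIV - {..<c - x}"
    by auto
  also have "measure M (UNIV - {..<c - x}) = 1 - measure M {..<c - x}"
    using prob_compl[of "{..<c - x}"] by simp
  also have "measure M {..<c - x} = cdf M (c - x)"
  proof -
    have "cdf M (c - x) = measure M ({..<c - x} \<union> {c - x})"
      unfolding cdf_def by (intro arg_cong[where f = "measure M"]) auto
    also have "\<dots> = measure M {..<c - x} + measure M {c - x}"
      by (rule finite_measure_Union) auto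
    finally show ?thesis
      using assms(2) by simp
  qed
  finally show ?thesis .
qed

lemma sim_map_measurable [measurable]: "sim_map N d \<in> borel_measurable borel"
  unfolding sim_map_def by measurable

lemma vimage_sim_map_borel: "A \<in> sets borel \<Longrightarrow> sim_map N d -` A \<in> sets borel"
  by (rule measurable_sets_borel[OF sim_map_measurable])

lemma sim_map_reflect:
  assumes "d < N"
  shows "sim_map N (N - 1 - d) (1 - y) = 1 - sim_map N d y"
proof -
  have "real (N - 1 - d) = real N - 1 - real d"
    using assms by simp
  then show ?thesis
    using assms by (simp add: sim_map_def field_simps)
qed

lemma vimage_sim_map_atMost:
  "N > 0 \<Longrightarrow> sim_map N d -` {..x} = {..real N * x - real d}"
  by (auto simp: sim_map_def field_simps)

lemma vimage_sim_map_singleton: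
  "N > 0 \<Longrightarrow> sim_map N d -` {p} = {real N * p - real d}"
  by (auto simp: sim_map_def field_simps)

locale bdv_self_similar =
  fixes B :: "nat list" and M :: "real measure"
  assumes bdv: "is_bdv B" and distribution: "real_distribution M"
    and self_similar: "self_similar B M"
begin

sublocale real_distribution M
  by (rule distribution)

lemma length_ge_3: "length B \<ge> 3"
  using bdv by (simp add: is_bdv_def)

lemma length_pos: "0 < length B"
  using length_ge_3 by linarith

lemma card_digit_set_eq: "card (digit_set B) = sum_list B"
  using bdv by (simp add: is_bdv_def card_digit_set)

lemma sum_list_ge_2: "sum_list B \<ge> 2"
  using bdv by (simp add: is_bdv_def)

lemma measure_self_similar:
  "A \<in> sets borel \<Longrightarrow> measure M A =
     1 / real (sum_list B) * (\<Sum>d\<in>digit_set B. measure M (sim_map (length B) d -` A))"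
  using self_similar by (simp add: self_similar_def)

lemma measure_singleton_self_similar:
  "measure M {p} = 1 / real (sum_list B) * (\<Sum>d\<in>digit_set B. measure M {real (length B) * p - real d})"
  using measure_self_similar[of "{p}"] by (simp add: vimage_sim_map_singleton[OF length_pos])

lemma measure_singleton_iterate:
  "\<exists>E :: nat set. finite E \<and>
     measure M {p} = 1 / real (sum_list B) ^ n *
       (\<Sum>e\<in>E. measure M {real (length B) ^ n * p - real e})"
proof (induction n)
  case 0
  show ?case by (intro exI[of _ "{0}"]) simp
next
  case (Suc n)
  let ?N = "length B" and ?k = "sum_list B" and ?D = "digit_set B"
  from Suc obtain E where "finite E" and E:
    "measure M {p} = 1 / real ?k ^ n * (\<Sum>e\<in>E. measure M {real ?N ^ n * p - real e})"
    by blast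
  define g where "g = (\<lambda>(e, d). d + ?N * e)"
  have "inj_on g (E \<times> {..<?N})"
    unfolding g_def by (rule inj_on_add_mult_lessThan)
  then have inj: "inj_on g (E \<times> ?D)"
    by (rule inj_on_subset) (auto simp: digit_set_less_length)
  have step: "measure M {real ?N ^ n * p - real e} =
     1 / real ?k * (\<Sum>d\<in>?D. measure M {real ?N ^ Suc n * p - real (g (e, d))})" for e
  proof -
    have "real ?N * (real ?N ^ n * p - real e) - real d = real ?N ^ Suc n * p - real (g (e, d))" for d
      by (simp add: g_def algebra_simps)
    then show ?thesis
      by (simp add: measure_singleton_self_similar[of "real ?N ^ n * p - real e"])
  qed
  have "measure M {p} = 1 / real ?k ^ n *
      (\<Sum>e\<in>E. 1 / real ?k * (\<Sum>d\<in>?D. measure M {real ?N ^ Suc n * p - real (g (e, d))}))"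
    by (simp only: E step)
  also have "\<dots> = 1 / real ?k ^ Suc n *
      (\<Sum>(e, d)\<in>E \<times> ?D. measure M {real ?N ^ Suc n * p - real (g (e, d))})"
    by (simp add: sum_divide_distrib[symmetric] sum.cartesian_product mult.commute)
  also have "\<dots> = 1 / real ?k ^ Suc n *
      (\<Sum>y\<in>g ` (E \<times> ?D). measure M {real ?N ^ Suc n * p - real y})"
    by (simp add: sum.reindex[OF inj] case_prod_unfold)
  finally show ?case
    using \<open>finite E\<close> by (intro exI[of _ "g ` (E \<times> ?D)"]) simp
qed

lemma measure_singleton_le: "measure M {p} \<le> 1 / real (sum_list B) ^ n"
proof -
  obtain E :: "nat set" where "finite E" and E:
    "measure M {p} = 1 / real (sum_list B) ^ n *
       (\<Sum>e\<in>E. measure M {real (length B) ^ n * p - real e})"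
    using measure_singleton_iterate by blast
  define c where "c = real (length B) ^ n * p"
  have inj: "inj_on (\<lambda>e. c - real e) E"
    by (auto simp: inj_on_def)
  have "(\<Sum>e\<in>E. measure M {c - real e}) = (\<Sum>q\<in>(\<lambda>e. c - real e) ` E. measure M {q})"
    by (simp add: sum.reindex[OF inj])
  also have "\<dots> = measure M ((\<lambda>e. c - real e) ` E)"
    using \<open>finite E\<close> by (intro finite_measure_eq_sum_singleton[symmetric]) auto
  also have "\<dots> \<le> 1"
    by (rule prob_le_1)
  finally have "1 / real (sum_list B) ^ n * (\<Sum>e\<in>E. measure M {c - real e}) \<le>
      1 / real (sum_list B) ^ n * 1"
    by (rule mult_left_mono) simp
  then show ?thesis
    using E unfolding c_def by simp
qed

lemma measure_singleton_eq_0 [simp]: "measure M {p} = 0"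
proof (rule antisym)
  have "1 / real (sum_list B) < 1"
    using sum_list_ge_2 by simp
  then have "(\<lambda>n. (1 / real (sum_list B)) ^ n) \<longlonglongrightarrow> 0"
    by (intro LIMSEQ_power_zero) simp
  then show "measure M {p} \<le> 0"
    using measure_singleton_le by (intro LIMSEQ_le_const) (auto simp: power_one_over)
qed simp

lemma cdf_isCont: "isCont (cdf M) x"
  by (simp add: isCont_cdf)

lemma cdf_self_similar:
  "cdf M x = 1 / real (sum_list B) * (\<Sum>d\<in>digit_set B. cdf M (real (length B) * x - real d))"
  using measure_self_similar[of "{..x}"]
  by (simp add: cdf_def vimage_sim_map_atMost[OF length_pos])

lemma cdf_le_cdf_scaled: "cdf M x \<le> cdf M (real (length B) * x)"
proof -
  have "(\<Sum>d\<in>digit_set B. cdf M (real (length B) * x - real d)) \<le>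
      real (card (digit_set B)) * cdf M (real (length B) * x)"
    by (rule sum_bounded_above) (simp add: cdf_nondecreasing)
  then show ?thesis
    using sum_list_ge_2 card_digit_set_eq by (subst cdf_self_similar) (simp add: field_simps)
qed

lemma cdf_scaled_le_cdf: "cdf M (real (length B) * x - (real (length B) - 1)) \<le> cdf M x"
proof -
  have "real (card (digit_set B)) * cdf M (real (length B) * x - (real (length B) - 1)) \<le>
      (\<Sum>d\<in>digit_set B. cdf M (real (length B) * x - real d))"
    by (rule sum_bounded_below) (auto intro!: cdf_nondecreasing dest!: digit_set_less_length)
  then show ?thesis
    using sum_list_ge_2 card_digit_set_eq by (subst cdf_self_similar) (simp add: field_simps)
qed

lemma cdf_eq_0_neg:
  assumes "x < 0"
  shows "cdf M x = 0"
proof (rule antisym)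
  have iter: "cdf M x \<le> cdf M (x * real (length B) ^ n)" for n
  proof (induction n)
    case (Suc n)
    have "x * real (length B) ^ Suc n = real (length B) * (x * real (length B) ^ n)"
      by (simp add: algebra_simps)
    then show ?case
      by (simp only:) (rule order_trans[OF Suc cdf_le_cdf_scaled])
  qed simp
  have "filterlim (\<lambda>n. x * real (length B) ^ n) at_bot sequentially"
    using assms length_ge_3
    by (intro filterlim_tendsto_neg_mult_at_bot[OF tendsto_const] filterlim_realpow_at_top) auto
  then have "(\<lambda>n. cdf M (x * real (length B) ^ n)) \<longlonglongrightarrow> 0"
    by (rule filterlim_compose[OF cdf_lim_at_bot])
  then show "cdf M x \<le> 0"
    using iter by (intro LIMSEQ_le_const) auto
qed (rule cdf_nonneg)

lemma cdf_eq_0: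
  assumes "x \<le> 0"
  shows "cdf M x = 0"
  using assms isCont_eq_if_eq_left[OF cdf_isCont, of 0 0] cdf_eq_0_neg
  by (cases "x < 0") auto

lemma cdf_eq_1_gt:
  assumes "1 < x"
  shows "cdf M x = 1"
proof (rule antisym)
  define t where "t = x - 1"
  have iter: "cdf M (1 + t * real (length B) ^ n) \<le> cdf M (1 + t)" for n
  proof (induction n)
    case (Suc n)
    have "1 + t * real (length B) ^ Suc n =
        real (length B) * (1 + t * real (length B) ^ n) - (real (length B) - 1)"
      by (simp add: algebra_simps)
    then show ?case
      by (simp only:) (rule order_trans[OF cdf_scaled_le_cdf Suc])
  qed simp
  have "filterlim (\<lambda>n. 1 + t * real (length B) ^ n) at_top sequentially"
    using assms length_ge_3 unfolding t_def
    by (intro filterlim_tendsto_add_at_top[OF tendsto_const]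
        filterlim_tendsto_pos_mult_at_top[OF tendsto_const] filterlim_realpow_at_top) auto
  then have "(\<lambda>n. cdf M (1 + t * real (length B) ^ n)) \<longlonglongrightarrow> 1"
    by (rule filterlim_compose[OF cdf_lim_at_top_prob])
  then show "1 \<le> cdf M x"
    using iter unfolding t_def by (intro LIMSEQ_le_const2) auto
qed (rule cdf_bounded_prob)

lemma cdf_eq_1:
  assumes "1 \<le> x"
  shows "cdf M x = 1"
  using assms isCont_eq_if_eq_right[OF cdf_isCont, of 1 1] cdf_eq_1_gt
  by (cases "1 < x") auto

lemma measure_atLeastAtMost_eq_cdf:
  assumes "0 \<le> x"
  shows "measure M {0..x} = cdf M x"
proof -
  have "measure M {..<0} \<le> cdf M 0"
    unfolding cdf_def by (intro finite_measure_mono) auto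
  then have "measure M {..<0} = 0"
    using cdf_eq_0[of 0] measure_nonneg[of M "{..<0}"] by simp
  have "cdf M x = measure M ({..<0} \<union> {0..x})"
    using assms unfolding cdf_def by (intro arg_cong[where f = "measure M"]) auto
  also have "\<dots> = measure M {..<0} + measure M {0..x}"
    by (rule finite_measure_Union) auto
  finally show ?thesis
    using \<open>measure M {..<0} = 0\<close> by simp
qed

lemma cdf_of_int: "cdf M (of_int j) = (if j \<le> 0 then 0 else 1)"
  by (simp add: cdf_eq_0 cdf_eq_1)

lemma cdf_adic_rational_Suc:
  "cdf M (of_int j / real (length B) ^ Suc n) = 1 / real (sum_list B) *
     (\<Sum>d\<in>digit_set B. cdf M (of_int (j - int d * int (length B) ^ n) / real (length B) ^ n))"
proof -
  have "B \<noteq> []"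
    using length_pos by auto
  then have scale: "real (length B) * (of_int j / real (length B) ^ Suc n) - real d =
      of_int (j - int d * int (length B) ^ n) / real (length B) ^ n" for d
    by (simp add: field_simps)
  show ?thesis
    by (simp only: cdf_self_similar[of "of_int j / real (length B) ^ Suc n"] scale)
qed

lemma bdv_self_similar_rev:
  "bdv_self_similar (rev B) (distr M borel (\<lambda>y. 1 - y))"
proof -
  let ?R = "distr M borel (\<lambda>y. 1 - y)" and ?N = "length B" and ?D = "digit_set B"
  have measure_R: "measure ?R X = measure M ((\<lambda>y. 1 - y) -` X)" if "X \<in> sets borel" for X
    using that by (subst measure_distr) auto
  have inj: "inj_on (\<lambda>d. ?N - 1 - d) ?D"
    by (auto simp: inj_on_def dest!: digit_set_less_length)
  have vimage_swap: "(\<lambda>y. 1 - y) -` (sim_map ?N (?N - 1 - d) -` A) = sim_map ?N d -` ((\<lambda>y. 1 - y) -` A)"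
    if "d \<in> ?D" for d A
    using sim_map_reflect[OF digit_set_less_length[OF that]] by auto
  have "measure ?R A =
      1 / real (sum_list (rev B)) * (\<Sum>d\<in>digit_set (rev B). measure ?R (sim_map (length (rev B)) d -` A))"
    if A: "A \<in> sets borel" for A
  proof -
    have "(\<lambda>y :: real. 1 - y) \<in> borel_measurable borel"
      by simp
    then have "(\<lambda>y. 1 - y) -` A \<in> sets borel"
      using A by (rule measurable_sets_borel)
    then have "measure ?R A = 1 / real (sum_list B) *
        (\<Sum>d\<in>?D. measure M (sim_map ?N d -` ((\<lambda>y. 1 - y) -` A)))"
      by (simp add: measure_R[OF A] measure_self_similar)
    also have "(\<Sum>d\<in>?D. measure M (sim_map ?N d -` ((\<lambda>y. 1 - y) -` A))) =
        (\<Sum>d\<in>?D. measure ?R (sim_map ?N (?N - 1 - d) -` A))"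
    proof (rule sum.cong[OF refl])
      fix d assume "d \<in> ?D"
      show "measure M (sim_map ?N d -` ((\<lambda>y. 1 - y) -` A)) = measure ?R (sim_map ?N (?N - 1 - d) -` A)"
        by (simp only: measure_R[OF vimage_sim_map_borel[OF A]] vimage_swap[OF \<open>d \<in> ?D\<close>])
    qed
    also have "\<dots> = (\<Sum>d\<in>digit_set (rev B). measure ?R (sim_map ?N d -` A))"
      by (simp only: digit_set_rev sum.reindex[OF inj] comp_def)
    finally show ?thesis
      by simp
  qed
  moreover have "real_distribution ?R"
    by (simp add: real_distribution_def real_distribution_axioms_def prob_space_distr)
  ultimately show ?thesis
    using is_bdv_rev[OF bdv] by (simp add: bdv_self_similar_def self_similar_def)
qed

end

lemma bdv_self_similar_unique:
  assumes "bdv_self_similar B M1" and "bdv_self_similar B M2"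
  shows "M1 = M2"
proof -
  interpret M1: bdv_self_similar B M1 by fact
  interpret M2: bdv_self_similar B M2 by fact
  have adic: "cdf M1 (of_int j / real (length B) ^ n) = cdf M2 (of_int j / real (length B) ^ n)"
    for j n
  proof (induction n arbitrary: j)
    case 0
    show ?case by (simp add: M1.cdf_of_int M2.cdf_of_int)
  next
    case (Suc n)
    show ?case
      by (simp only: M1.cdf_adic_rational_Suc M2.cdf_adic_rational_Suc Suc)
  qed
  have "cdf M1 x = cdf M2 x" for x
    by (rule eq_if_eq_on_adic_rationals[OF _ M1.cdf_isCont M2.cdf_isCont adic])
      (use M1.length_ge_3 in simp)
  then show ?thesis
    by (intro cdf_unique M1.distribution M2.distribution ext)
qed

(* The clamp to N - 1 only makes the series converge for every stream; it is inactive on digits below N. *)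
definition digit_value :: "nat \<Rightarrow> nat stream \<Rightarrow> real" where
  "digit_value N \<omega> = (\<Sum>i. real (min (\<omega> !! i) (N - 1)) / real N ^ Suc i)"

lemma summable_digit_value:
  assumes "2 \<le> N"
  shows "summable (\<lambda>i. real (min (\<omega> !! i) (N - 1)) / real N ^ Suc i)"
proof (rule summable_comparison_test)
  show "summable (\<lambda>i. (1 / real N) ^ i)"
    using assms by (intro summable_geometric) auto
  have "real (min (\<omega> !! i) (N - 1)) / real N ^ Suc i \<le> real N / real N ^ Suc i" for i
    by (intro divide_right_mono) auto
  then show "\<exists>n0. \<forall>i\<ge>n0. norm (real (min (\<omega> !! i) (N - 1)) / real N ^ Suc i) \<le> (1 / real N) ^ i"
    using assms by (auto simp: power_one_over)
qed

lemma digit_value_SCons: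
  assumes "2 \<le> N" and "d < N"
  shows "digit_value N (d ## \<omega>) = sim_map N d (digit_value N \<omega>)"
proof -
  let ?a = "\<lambda>\<omega> i. real (min (\<omega> !! i) (N - 1)) / real N ^ Suc i"
  have "?a \<omega> sums digit_value N \<omega>"
    using summable_digit_value[OF assms(1)] by (simp add: digit_value_def summable_sums)
  then have "(\<lambda>i. ?a (d ## \<omega>) (Suc i)) sums (digit_value N \<omega> / real N)"
    using sums_divide[of "?a \<omega>" _ "real N"] by (simp add: field_simps)
  then have "?a (d ## \<omega>) sums (digit_value N \<omega> / real N + ?a (d ## \<omega>) 0)"
    by (subst sums_Suc_iff[symmetric])
  moreover have "?a (d ## \<omega>) 0 = real d / real N"
    using assms by simp
  ultimately show ?thesis
    by (simp add: digit_value_def sums_iff sim_map_def add_divide_distrib)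
qed

lemma digit_value_measurable [measurable]:
  "digit_value N \<in> borel_measurable (stream_space (measure_pmf p))"
  unfolding digit_value_def by measurable

lemma emeasure_distr_digit_value:
  fixes D :: "nat set" and N :: nat
  assumes "finite D" and "D \<noteq> {}" and digits: "\<And>d. d \<in> D \<Longrightarrow> d < N" and "2 \<le> N"
    and A: "A \<in> sets borel"
  defines "S \<equiv> stream_space (measure_pmf (pmf_of_set D))"
  shows "emeasure (distr S borel (digit_value N)) A =
    (\<Sum>d\<in>D. emeasure (distr S borel (digit_value N)) (sim_map N d -` A)) / card D"
proof -
  interpret S: prob_space S
    unfolding S_def by (intro prob_space.prob_space_stream_space prob_space_measure_pmf)
  have [measurable]: "digit_value N \<in> borel_measurable S"
    unfolding S_def by measurable
  have emeasure_distr: "emeasure (distr S borel (digit_value N)) X =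
      (\<integral>\<^sup>+\<omega>. indicator X (digit_value N \<omega>) \<partial>S)" if "X \<in> sets borel" for X
  proof -
    have "emeasure (distr S borel (digit_value N)) X =
        (\<integral>\<^sup>+x. indicator X x \<partial>distr S borel (digit_value N))"
      using that by simp
    also have "\<dots> = (\<integral>\<^sup>+\<omega>. indicator X (digit_value N \<omega>) \<partial>S)"
      using that unfolding S_def by (subst nn_integral_distr) auto
    finally show ?thesis .
  qed
  have "emeasure (distr S borel (digit_value N)) A = (\<integral>\<^sup>+\<omega>. indicator A (digit_value N \<omega>) \<partial>S)"
    by (rule emeasure_distr[OF A])
  also have "\<dots> =
      (\<integral>\<^sup>+d. (\<integral>\<^sup>+\<omega>. indicator A (digit_value N (d ## \<omega>)) \<partial>S) \<partial>measure_pmf (pmf_of_set D))"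
    unfolding S_def
    by (rule prob_space.nn_integral_stream_space[OF prob_space_measure_pmf])
      (use A in \<open>simp add: S_def[symmetric]\<close>)
  also have "\<dots> = (\<Sum>d\<in>D. \<integral>\<^sup>+\<omega>. indicator A (digit_value N (d ## \<omega>)) \<partial>S) / card D"
    using assms by (intro nn_integral_pmf_of_set)
  also have "\<dots> = (\<Sum>d\<in>D. emeasure (distr S borel (digit_value N)) (sim_map N d -` A)) / card D"
  proof -
    have "(\<integral>\<^sup>+\<omega>. indicator A (digit_value N (d ## \<omega>)) \<partial>S) =
        emeasure (distr S borel (digit_value N)) (sim_map N d -` A)" if "d \<in> D" for d
      using digits[OF that] \<open>2 \<le> N\<close> A
      by (subst emeasure_distr) (auto simp: digit_value_SCons indicator_def vimage_sim_map_borel)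
    then show ?thesis
      by simp
  qed
  finally show ?thesis .
qed

lemma self_similar_exists:
  assumes "is_bdv B"
  shows "\<exists>M. real_distribution M \<and> self_similar B M"
proof -
  let ?D = "digit_set B" and ?N = "length B" and ?k = "sum_list B"
  define M where "M = distr (stream_space (measure_pmf (pmf_of_set ?D))) borel (digit_value ?N)"
  have card_D: "card ?D = ?k" and "2 \<le> ?k" and "3 \<le> ?N"
    using assms by (simp_all add: is_bdv_def card_digit_set)
  then have "card ?D \<noteq> 0"
    by linarith
  then have "?D \<noteq> {}"
    by auto
  have "real_distribution M"
    unfolding M_def real_distribution_def real_distribution_axioms_def
    by (auto intro!: prob_space.prob_space_distr prob_space.prob_space_stream_space prob_space_measure_pmf)
  then interpret real_distribution M .
  have "measure M A = 1 / real ?k * (\<Sum>d\<in>?D. measure M (sim_map ?N d -` A))"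
    if A: "A \<in> sets borel" for A
  proof -
    have "ennreal (measure M A) = (\<Sum>d\<in>?D. ennreal (measure M (sim_map ?N d -` A))) / card ?D"
      using emeasure_distr_digit_value[of ?D ?N, OF _ \<open>?D \<noteq> {}\<close> digit_set_less_length _ A] \<open>3 \<le> ?N\<close>
      by (simp add: M_def[symmetric] emeasure_eq_measure)
    also have "\<dots> = ennreal ((\<Sum>d\<in>?D. measure M (sim_map ?N d -` A)) / real ?k)"
      using card_D \<open>2 \<le> ?k\<close>
      by (simp add: ennreal_of_nat_eq_real_of_nat divide_ennreal sum_nonneg)
    finally show ?thesis
      by (simp add: sum_nonneg)
  qed
  then show ?thesis
    using \<open>real_distribution M\<close> by (auto simp: self_similar_def)
qed

lemma bdv_measure_eq:
  assumes "bdv_self_similar B M"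
  shows "bdv_measure B = M"
proof -
  interpret bdv_self_similar B M by fact
  have "\<exists>!M. prob_space M \<and> sets M = sets (borel :: real measure) \<and> self_similar B M"
  proof (rule ex1I)
    show "prob_space M \<and> sets M = sets borel \<and> self_similar B M"
      by (simp add: prob_space_axioms self_similar)
    fix M' assume "prob_space M' \<and> sets M' = sets (borel :: real measure) \<and> self_similar B M'"
    then have "bdv_self_similar B M'"
      using bdv by (simp add: bdv_self_similar_def real_distribution_def real_distribution_axioms_def)
    then show "M' = M"
      using bdv_self_similar_unique bdv_self_similar_axioms by blast
  qed
  then show ?thesis
    unfolding bdv_measure_def by (rule the1_equality) (simp add: prob_space_axioms self_similar)
qed

lemma bdv_self_similar_bdv_measure:
  assumes "is_bdv B"
  shows "bdv_self_similar B (bdv_measure B)"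
proof -
  obtain M where "real_distribution M" and "self_similar B M"
    using self_similar_exists[OF assms] by blast
  then have "bdv_self_similar B M"
    using assms by (simp add: bdv_self_similar_def)
  then show ?thesis
    by (simp add: bdv_measure_eq)
qed

theorem proposition2p5:
  fixes B :: "nat list" and x :: real
  assumes "is_bdv B" and "x \<in> {0..1}"
  shows "bdv_cdf (rev B) x = 1 - bdv_cdf B (1 - x)"
proof -
  interpret M: bdv_self_similar B "bdv_measure B"
    using assms(1) by (rule bdv_self_similar_bdv_measure)
  have rev: "bdv_measure (rev B) = distr (bdv_measure B) borel (\<lambda>y. 1 - y)"
    using M.bdv_self_similar_rev by (rule bdv_measure_eq)
  interpret R: bdv_self_similar "rev B" "bdv_measure (rev B)"
    using is_bdv_rev[OF assms(1)] by (rule bdv_self_similar_bdv_measure)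
  have "bdv_cdf (rev B) x = cdf (bdv_measure (rev B)) x"
    using assms(2) by (simp add: bdv_cdf_def R.measure_atLeastAtMost_eq_cdf)
  also have "\<dots> = 1 - cdf (bdv_measure B) (1 - x)"
    unfolding rev by (rule cdf_distr_reflect) (simp_all add: M.distribution)
  also have "\<dots> = 1 - bdv_cdf B (1 - x)"
    using assms(2) by (simp add: bdv_cdf_def M.measure_atLeastAtMost_eq_cdf)
  finally show ?thesis .
qed

end
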